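(* Let $G$ be a biconnected series-parallel graph without transitive edges, and let $G'$ be a component of $G$ with respect to some separation pair $(s,t)$. Then $G'$ is critical if and only if $G'$ is heavy.
   Context: A biconnected graph is series-parallel if it contains no subdivision of $K_4$. For a biconnected graph $G$, a separation pair is a pair $(s,t)$ of vertices such that $G-s-t$ is disconnected. A transitive edge is an edge joining the two vertices of some separation pair. A component of $G$ with respect to $(s,t)$ is the subgraph induced by $s$, $t$ and the vertex set of one connected component of $G-s-t$; $s,t$ are its poles and its other vertices are internal vertices. A component $G'$ w.r.t. $(s,t)$ is heavy if it has an internal vertex adjacent to neither $s$ nor $t$; otherwise it is light. A component $G'$ is critical if there exist an internal vertex $v$ of $G'$ adjacent to neither $s$ nor $t$, and a simple $s$–$t$ path in $G'$ passing through $v$, written $s - p_s - v - p_t - t$, such that no vertex of the subpath $p_s$ strictly between $s$ and $v$ is adjacent to $t$, and no vertex of the subpath $p_t$ strictly between $v$ and $t$ is adjacent to $s$. *)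

theory Defs
  imports Main
begin

definition graph :: "'a set \<Rightarrow> ('a \<Rightarrow> 'a \<Rightarrow> bool) \<Rightarrow> bool" where
  "graph V E \<longleftrightarrow> finite V \<and> (\<forall>x y. E x y \<longrightarrow> E y x) \<and> (\<forall>x. \<not> E x x)
     \<and> (\<forall>x y. E x y \<longrightarrow> x \<in> V \<and> y \<in> V)"

definition path_in :: "('a \<Rightarrow> 'a \<Rightarrow> bool) \<Rightarrow> 'a set \<Rightarrow> 'a list \<Rightarrow> bool" where
  "path_in E S xs \<longleftrightarrow> xs \<noteq> [] \<and> set xs \<subseteq> S \<and> distinct xs
     \<and> (\<forall>i. Suc i < length xs \<longrightarrow> E (xs ! i) (xs ! Suc i))"

definition reach :: "('a \<Rightarrow> 'a \<Rightarrow> bool) \<Rightarrow> 'a set \<Rightarrow> 'a \<Rightarrow> 'a \<Rightarrow> bool" where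
  "reach E S x y \<longleftrightarrow> (\<exists>xs. path_in E S xs \<and> hd xs = x \<and> last xs = y)"

definition connected_graph :: "'a set \<Rightarrow> ('a \<Rightarrow> 'a \<Rightarrow> bool) \<Rightarrow> bool" where
  "connected_graph V E \<longleftrightarrow> V \<noteq> {} \<and> (\<forall>x\<in>V. \<forall>y\<in>V. reach E V x y)"

definition biconnected :: "'a set \<Rightarrow> ('a \<Rightarrow> 'a \<Rightarrow> bool) \<Rightarrow> bool" where
  "biconnected V E \<longleftrightarrow> graph V E \<and> card V \<ge> 3 \<and> connected_graph V E
     \<and> (\<forall>v\<in>V. connected_graph (V - {v}) E)"

definition has_K4_subdivision :: "'a set \<Rightarrow> ('a \<Rightarrow> 'a \<Rightarrow> bool) \<Rightarrow> bool" where
  "has_K4_subdivision V E \<longleftrightarrow> (\<exists>(b :: nat \<Rightarrow> 'a) (P :: nat \<Rightarrow> nat \<Rightarrow> 'a list).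
     inj_on b {..<4} \<and> b ` {..<4} \<subseteq> V \<and>
     (\<forall>i j. i < j \<and> j < 4 \<longrightarrow>
        path_in E V (P i j) \<and> hd (P i j) = b i \<and> last (P i j) = b j
        \<and> set (butlast (tl (P i j))) \<inter> b ` {..<4} = {}) \<and>
     (\<forall>i j k l. i < j \<and> j < 4 \<and> k < l \<and> l < 4 \<and> (i, j) \<noteq> (k, l) \<longrightarrow>
        set (P i j) \<inter> set (P k l) \<subseteq> b ` {..<4}))"

definition series_parallel :: "'a set \<Rightarrow> ('a \<Rightarrow> 'a \<Rightarrow> bool) \<Rightarrow> bool" where
  "series_parallel V E \<longleftrightarrow> biconnected V E \<and> \<not> has_K4_subdivision V E"

definition sep_pair :: "'a set \<Rightarrow> ('a \<Rightarrow> 'a \<Rightarrow> bool) \<Rightarrow> 'a \<Rightarrow> 'a \<Rightarrow> bool" where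
  "sep_pair V E s t \<longleftrightarrow> s \<in> V \<and> t \<in> V \<and> s \<noteq> t \<and> \<not> connected_graph (V - {s, t}) E"

definition no_transitive_edges :: "'a set \<Rightarrow> ('a \<Rightarrow> 'a \<Rightarrow> bool) \<Rightarrow> bool" where
  "no_transitive_edges V E \<longleftrightarrow> (\<forall>s t. sep_pair V E s t \<longrightarrow> \<not> E s t)"

definition conn_comp :: "('a \<Rightarrow> 'a \<Rightarrow> bool) \<Rightarrow> 'a set \<Rightarrow> 'a set \<Rightarrow> bool" where
  "conn_comp E S C \<longleftrightarrow> (\<exists>x\<in>S. C = {y. reach E S x y})"

text \<open>A component G' w.r.t. (s,t) is the subgraph induced by s, t and C, where C is the vertex set
  of a connected component of G - s - t; C is its set of internal vertices.\<close>
definition component :: "'a set \<Rightarrow> ('a \<Rightarrow> 'a \<Rightarrow> bool) \<Rightarrow> 'a \<Rightarrow> 'a \<Rightarrow> 'a set \<Rightarrow> bool" where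
  "component V E s t C \<longleftrightarrow> sep_pair V E s t \<and> conn_comp E (V - {s, t}) C"

definition heavy :: "('a \<Rightarrow> 'a \<Rightarrow> bool) \<Rightarrow> 'a \<Rightarrow> 'a \<Rightarrow> 'a set \<Rightarrow> bool" where
  "heavy E s t C \<longleftrightarrow> (\<exists>v\<in>C. \<not> E v s \<and> \<not> E v t)"

definition critical :: "('a \<Rightarrow> 'a \<Rightarrow> bool) \<Rightarrow> 'a \<Rightarrow> 'a \<Rightarrow> 'a set \<Rightarrow> bool" where
  "critical E s t C \<longleftrightarrow> (\<exists>v\<in>C. \<not> E v s \<and> \<not> E v t \<and>
     (\<exists>ps pt. path_in E (C \<union> {s, t}) (s # ps @ v # pt @ [t])
        \<and> (\<forall>u\<in>set ps. \<not> E u t) \<and> (\<forall>u\<in>set pt. \<not> E u s)))"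

end

theory Submission
  imports Defs
begin

text \<open>
  A critical component is heavy by definition. Conversely, let w be an internal vertex adjacent
  to neither pole, D the component of w in the subgraph induced by such vertices, and N the set
  of vertices outside D with a neighbour in D; each vertex of N is internal and adjacent to a pole.
  If N has a vertex x adjacent to s but not t and a vertex y adjacent to t but not s, then
  s, x, a path through D, y, t witnesses criticality. Otherwise, up to exchanging the poles, every
  vertex of N is adjacent to s, and G contains a subdivision of K4 with branch vertices s, x, y, z:
  y is where a w-t path avoiding s last leaves D \<union> N; as sy is an edge and there are no
  transitive edges, {s, y} is not a separation pair, so some w-t path avoids both s and y; z is
  its first vertex on the y-t path and x its last vertex in D \<union> N before z. The six branch
  paths are the edges sx and sy, a path through D from x to y, the two subpaths ending at z, and
  an s-t path outside the component continued backwards along the y-t path to z.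
\<close>

section \<open>Simple paths and reachability\<close>

lemma path_in_iff_successively:
  "path_in E S xs \<longleftrightarrow> xs \<noteq> [] \<and> set xs \<subseteq> S \<and> distinct xs \<and> successively E xs"
  unfolding path_in_def successively_conv_nth by blast

lemma path_in_singleton [simp]: "path_in E S [a] \<longleftrightarrow> a \<in> S"
  unfolding path_in_iff_successively by auto

lemma path_in_Cons_Cons:
  "path_in E S (a # b # xs) \<longleftrightarrow> a \<in> S \<and> a \<notin> set (b # xs) \<and> E a b \<and> path_in E S (b # xs)"
  unfolding path_in_iff_successively by auto

lemma path_in_append:
  "path_in E S (xs @ ys) \<longleftrightarrow>
     (xs = [] \<longrightarrow> path_in E S ys) \<and> (ys = [] \<longrightarrow> path_in E S xs) \<and>
     (xs \<noteq> [] \<longrightarrow> ys \<noteq> [] \<longrightarrow>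
        path_in E S xs \<and> path_in E S ys \<and> E (last xs) (hd ys) \<and> set xs \<inter> set ys = {})"
  unfolding path_in_iff_successively successively_append_iff by auto

lemma path_in_prefix: "path_in E S (xs @ ys) \<Longrightarrow> xs \<noteq> [] \<Longrightarrow> path_in E S xs"
  and path_in_suffix: "path_in E S (xs @ ys) \<Longrightarrow> ys \<noteq> [] \<Longrightarrow> path_in E S ys"
  by (auto simp: path_in_append split: if_splits)

lemma path_in_subset: "path_in E S xs \<Longrightarrow> set xs \<subseteq> S' \<Longrightarrow> path_in E S' xs"
  and path_in_mono: "path_in E S xs \<Longrightarrow> S \<subseteq> S' \<Longrightarrow> path_in E S' xs"
  unfolding path_in_def by auto

lemma path_in_rev: "symp E \<Longrightarrow> path_in E S (rev xs) \<longleftrightarrow> path_in E S xs"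
  unfolding path_in_iff_successively by (auto intro: successively_mono dest: sympD)

lemma path_in_extend:
  assumes "path_in E S p" "{a, b} \<subseteq> S - set p" "a \<noteq> b" "E a (hd p)" "E (last p) b"
  shows "path_in E S (a # p @ [b])"
proof -
  have "p \<noteq> []" using assms(1) by (simp add: path_in_def)
  then show ?thesis using assms unfolding path_in_iff_successively
    by (auto simp: successively_append_iff successively_Cons)
qed

lemma path_in_glue_rev:
  assumes "symp E" "path_in E S (a # P @ [t])" "path_in E S (z # q)" "last (z # q) = t"
    "set (a # P) \<inter> set (z # q) = {}"
  shows "path_in E S (a # (P @ rev q) @ [z])"
proof -
  have "path_in E S (a # P)" "E (last (a # P)) t"
    using assms(2) path_in_append[of E S "a # P" "[t]"] by auto
  moreover have "path_in E S (rev q @ [z])" "hd (rev q @ [z]) = t"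
    using path_in_rev[OF assms(1), of S "z # q"] assms(3,4) hd_rev[of "z # q"] by auto
  moreover have "set (a # P) \<inter> set (rev q @ [z]) = {}" using assms(5) by auto
  ultimately have "path_in E S ((a # P) @ (rev q @ [z]))" unfolding path_in_append by auto
  then show ?thesis by simp
qed

lemma path_in_split_at:
  assumes "path_in E S (y # Q @ [t])" "z \<in> set (Q @ [t])"
  obtains q1 q2 where "Q @ [t] = q1 @ z # q2" "path_in E S (y # q1 @ [z])" "path_in E S (z # q2)"
    "last (z # q2) = t" "t \<notin> set q1"
proof -
  obtain q1 q2 where q: "Q @ [t] = q1 @ z # q2" using assms(2) by (meson split_list)
  then have p: "path_in E S (y # q1 @ z # q2)" using assms(1) by simp
  have "last (z # q2) = t" using arg_cong[OF q, of last] by simp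
  moreover from this have "t \<notin> set q1" using p last_in_set[of "z # q2"] unfolding path_in_def by auto
  moreover have "path_in E S (y # q1 @ [z])" using path_in_prefix[of E S "y # q1 @ [z]" q2] p by simp
  moreover have "path_in E S (z # q2)" using path_in_suffix[of E S "y # q1" "z # q2"] p by simp
  ultimately show thesis using that q by blast
qed

lemma rtranclp_if_path_in:
  "path_in E S xs \<Longrightarrow> (\<lambda>a b. E a b \<and> a \<in> S \<and> b \<in> S)\<^sup>*\<^sup>* (hd xs) (last xs)"
proof (induction xs)
  case (Cons a xs)
  show ?case
  proof (cases xs)
    case (Cons b ys)
    with Cons.prems have "path_in E S xs" "E a b" "a \<in> S" "b \<in> S"
      by (auto simp: path_in_Cons_Cons path_in_def)
    with Cons.IH Cons show ?thesis by (auto intro: converse_rtranclp_into_rtranclp)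
  qed simp
qed (simp add: path_in_def)

lemma path_in_if_rtranclp:
  assumes "(\<lambda>a b. E a b \<and> a \<in> S \<and> b \<in> S)\<^sup>*\<^sup>* x y" "y \<in> S"
  shows "\<exists>p. path_in E S p \<and> hd p = x \<and> last p = y"
  using assms
proof (induction rule: converse_rtranclp_induct)
  case base
  then show ?case by (intro exI[of _ "[y]"]) simp
next
  case (step a b)
  then obtain p where p: "path_in E S p" "hd p = b" "last p = y" by auto
  show ?case
  proof (cases "a \<in> set p")
    case True
    \<comment> \<open>cut the loop through a\<close>
    then obtain u w where "p = u @ a # w" by (meson split_list)
    then show ?thesis using p by (intro exI[of _ "a # w"]) (auto simp: path_in_append)
  next
    case False
    obtain c q where "p = c # q" using p(1) by (cases p) (auto simp: path_in_def)
    then show ?thesis using False p step(1)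
      by (intro exI[of _ "a # p"]) (auto simp: path_in_Cons_Cons)
  qed
qed

lemma reach_iff_rtranclp:
  "reach E S x y \<longleftrightarrow> x \<in> S \<and> y \<in> S \<and> (\<lambda>a b. E a b \<and> a \<in> S \<and> b \<in> S)\<^sup>*\<^sup>* x y"
proof
  assume "reach E S x y"
  then obtain p where p: "path_in E S p" "hd p = x" "last p = y" unfolding reach_def by auto
  then have "x \<in> set p" "y \<in> set p" "set p \<subseteq> S" by (auto simp: path_in_def)
  then show "x \<in> S \<and> y \<in> S \<and> (\<lambda>a b. E a b \<and> a \<in> S \<and> b \<in> S)\<^sup>*\<^sup>* x y"
    using rtranclp_if_path_in[OF p(1)] p(2,3) by auto
next
  assume "x \<in> S \<and> y \<in> S \<and> (\<lambda>a b. E a b \<and> a \<in> S \<and> b \<in> S)\<^sup>*\<^sup>* x y"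
  then show "reach E S x y" unfolding reach_def using path_in_if_rtranclp[of E S x y] by blast
qed

lemma reach_refl: "x \<in> S \<Longrightarrow> reach E S x x"
  unfolding reach_iff_rtranclp by auto

lemma reach_trans: "reach E S x y \<Longrightarrow> reach E S y z \<Longrightarrow> reach E S x z"
  unfolding reach_iff_rtranclp by auto

lemma reach_step: "reach E S x y \<Longrightarrow> E y z \<Longrightarrow> z \<in> S \<Longrightarrow> reach E S x z"
  unfolding reach_iff_rtranclp by (auto intro: rtranclp.rtrancl_into_rtrancl)

lemma reach_sym: "symp E \<Longrightarrow> reach E S x y \<Longrightarrow> reach E S y x"
  unfolding reach_def by (metis path_in_rev hd_rev last_rev)

lemma reach_mono:
  assumes "reach E S x y" "S \<subseteq> S'"
  shows "reach E S' x y"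
proof -
  obtain p where "path_in E S p" "hd p = x" "last p = y" using assms(1) unfolding reach_def by blast
  moreover from this(1) assms(2) have "path_in E S' p" by (rule path_in_mono)
  ultimately show ?thesis unfolding reach_def by blast
qed

lemma reach_in: "reach E S x y \<Longrightarrow> x \<in> S \<and> y \<in> S"
  unfolding reach_iff_rtranclp by auto

lemma reach_if_in_path: "path_in E S p \<Longrightarrow> u \<in> set p \<Longrightarrow> reach E S (hd p) u"
proof -
  assume p: "path_in E S p" "u \<in> set p"
  then obtain a b where ab: "p = a @ u # b" by (meson split_list)
  then have "path_in E S (a @ [u])" using p(1) path_in_append[of E S "a @ [u]" b] by auto
  then show ?thesis using ab unfolding reach_def by (intro exI[of _ "a @ [u]"]) (cases a, auto)
qed

lemma reach_if_in_butlast: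
  assumes "path_in E S p" "u \<in> set (butlast p)"
  shows "reach E (S - {last p}) (hd p) u"
proof -
  have "p = butlast p @ [last p]" "butlast p \<noteq> []" using assms by (auto simp: path_in_def)
  then have "path_in E (S - {last p}) (butlast p)" "hd (butlast p) = hd p"
    using assms(1) path_in_append[of E S "butlast p" "[last p]"]
    by (auto simp: path_in_def, metis hd_append2)
  then show ?thesis using reach_if_in_path assms(2) by metis
qed

lemma reach_path_between:
  assumes "reach E S a b" "a \<noteq> b"
  obtains P where "path_in E S (a # P @ [b])"
proof -
  obtain p where p: "path_in E S p" "hd p = a" "last p = b" using assms(1) unfolding reach_def by blast
  then obtain q where q: "p = a # q" by (cases p) (auto simp: path_in_def)
  with assms(2) p(3) obtain P where "q = P @ [b]" by (cases q rule: rev_cases) auto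
  then show thesis using p(1) q that by blast
qed

section \<open>Subdivisions of K4\<close>

lemma set_path_Int_subset:
  assumes "disjnt (set I) (set J)" "{x, y, x', y'} \<subseteq> B"
  shows "set (x # I @ [y]) \<inter> set (x' # J @ [y']) \<subseteq> B"
  using assms by (auto simp: disjnt_iff)

lemma has_K4_subdivisionI:
  assumes "distinct (a # b # c # d # Iab @ Iac @ Iad @ Ibc @ Ibd @ Icd)"
    and "path_in E V (a # Iab @ [b])" "path_in E V (a # Iac @ [c])" "path_in E V (a # Iad @ [d])"
    and "path_in E V (b # Ibc @ [c])" "path_in E V (b # Ibd @ [d])" "path_in E V (c # Icd @ [d])"
  shows "has_K4_subdivision V E"
proof -
  define br where "br = (!) [a, b, c, d]"
  define I where "I = (\<lambda>(i, j). [[[], Iab, Iac, Iad], [[], [], Ibc, Ibd], [[], [], [], Icd]] ! i ! j)"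
  define pairs :: "(nat \<times> nat) set" where "pairs = {(0, 1), (0, 2), (0, 3), (1, 2), (1, 3), (2, 3)}"
  have four: "{..<4::nat} = {0, 1, 2, 3}" by auto
  have in_pairs: "(i, j) \<in> pairs" if "i < j" "j < 4" for i j :: nat
    using that unfolding pairs_def by auto
  have "disjnt (set Iab) (set Iac)" "disjnt (set Iab) (set Iad)" "disjnt (set Iab) (set Ibc)"
    "disjnt (set Iab) (set Ibd)" "disjnt (set Iab) (set Icd)" "disjnt (set Iac) (set Iad)"
    "disjnt (set Iac) (set Ibc)" "disjnt (set Iac) (set Ibd)" "disjnt (set Iac) (set Icd)"
    "disjnt (set Iad) (set Ibc)" "disjnt (set Iad) (set Ibd)" "disjnt (set Iad) (set Icd)"
    "disjnt (set Ibc) (set Ibd)" "disjnt (set Ibc) (set Icd)" "disjnt (set Ibd) (set Icd)"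
    using assms(1) by (simp_all add: disjnt_def Int_Un_distrib)
  then have interiors_disjoint: "\<forall>p \<in> pairs. \<forall>q \<in> pairs. p \<noteq> q \<longrightarrow> disjnt (set (I p)) (set (I q))"
    unfolding pairs_def I_def by (simp add: disjnt_commute)
  show ?thesis
    unfolding has_K4_subdivision_def
  proof (intro exI[of _ br] exI[of _ "\<lambda>i j. br i # I (i, j) @ [br j]"] conjI allI impI)
    show "inj_on br {..<4}" using assms(1) unfolding four br_def by auto
    show "br ` {..<4} \<subseteq> V" using assms(2,7) unfolding four br_def path_in_def by auto
  next
    fix i j :: nat assume "i < j \<and> j < 4"
    then have "(i, j) \<in> pairs" using in_pairs by blast
    then show "path_in E V (br i # I (i, j) @ [br j])" "hd (br i # I (i, j) @ [br j]) = br i"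
      "last (br i # I (i, j) @ [br j]) = br j"
      "set (butlast (tl (br i # I (i, j) @ [br j]))) \<inter> br ` {..<4} = {}"
      using assms unfolding pairs_def four br_def I_def by (elim insertE emptyE; simp)+
  next
    fix i j k l :: nat assume ijkl: "i < j \<and> j < 4 \<and> k < l \<and> l < 4 \<and> (i, j) \<noteq> (k, l)"
    then have "disjnt (set (I (i, j))) (set (I (k, l)))"
      using interiors_disjoint in_pairs by blast
    then show "set (br i # I (i, j) @ [br j]) \<inter> set (br k # I (k, l) @ [br l]) \<subseteq> br ` {..<4}"
      by (rule set_path_Int_subset) (use ijkl in auto)
  qed
qed

section \<open>Components of a separation pair\<close>

definition far_vertices :: "('a \<Rightarrow> 'a \<Rightarrow> bool) \<Rightarrow> 'a \<Rightarrow> 'a \<Rightarrow> 'a set \<Rightarrow> 'a set" where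
  "far_vertices E s t C = {u \<in> C. \<not> E u s \<and> \<not> E u t}"

definition neighbourhood :: "('a \<Rightarrow> 'a \<Rightarrow> bool) \<Rightarrow> 'a set \<Rightarrow> 'a set" where
  "neighbourhood E D = {x. x \<notin> D \<and> (\<exists>d\<in>D. E d x)}"

lemma far_vertices_swap: "far_vertices E t s C = far_vertices E s t C"
  unfolding far_vertices_def by blast

lemma heavy_iff_far_vertices: "heavy E s t C \<longleftrightarrow> far_vertices E s t C \<noteq> {}"
  unfolding heavy_def far_vertices_def by blast

lemma component_swap: "component V E s t C \<Longrightarrow> component V E t s C"
  unfolding component_def sep_pair_def by (auto simp: insert_commute)

lemma path_leaves_through_neighbourhood:
  assumes "path_in E S p" "hd p \<in> D" "last p \<notin> D \<union> neighbourhood E D"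
  obtains a x c where "p = a @ x # c" "path_in E S (x # c)" "x \<in> neighbourhood E D" "c \<noteq> []"
    "set c \<inter> (D \<union> neighbourhood E D) = {}"
proof -
  have "hd p \<in> set p" using assms(1) by (simp add: path_in_def)
  then obtain a x c where p: "p = a @ x # c" "x \<in> D \<union> neighbourhood E D"
    and c: "\<forall>u\<in>set c. u \<notin> D \<union> neighbourhood E D"
    using split_list_last_prop[of p "\<lambda>u. u \<in> D \<union> neighbourhood E D"] assms(2) by blast
  have "c \<noteq> []" using p assms(3) by auto
  moreover have path: "path_in E S (x # c)" using assms(1) p(1) path_in_suffix by blast
  moreover have "x \<in> neighbourhood E D"
  proof (rule ccontr)
    assume "x \<notin> neighbourhood E D"
    then have "x \<in> D" using p(2) by blast
    moreover have "E x (hd c)" using path \<open>c \<noteq> []\<close> by (cases c) (auto simp: path_in_Cons_Cons)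
    ultimately have "hd c \<in> D \<union> neighbourhood E D" unfolding neighbourhood_def by blast
    then show False using c \<open>c \<noteq> []\<close> by simp
  qed
  ultimately show thesis using that p(1) c by blast
qed

locale pole_component =
  fixes V :: "'a set" and E :: "'a \<Rightarrow> 'a \<Rightarrow> bool" and s t :: 'a and C :: "'a set"
  assumes biconnected: "biconnected V E"
    and no_transitive_edges: "no_transitive_edges V E"
    and component: "component V E s t C"
begin

lemma edge_sym: "symp E"
  and edge_irrefl: "\<not> E x x"
  and edge_in_V: "E x y \<Longrightarrow> x \<in> V \<and> y \<in> V"
  using biconnected unfolding biconnected_def graph_def symp_def by blast+

lemma poles: "s \<in> V" "t \<in> V" "s \<noteq> t"
  using component unfolding component_def sep_pair_def by auto

lemma componentE: obtains x where "x \<in> V - {s, t}" "C = {y. reach E (V - {s, t}) x y}"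
  using component unfolding component_def conn_comp_def by blast

lemma component_subset: "C \<subseteq> V - {s, t}"
proof -
  obtain x where "C = {y. reach E (V - {s, t}) x y}" using componentE by blast
  then show ?thesis by (auto dest: reach_in)
qed

lemma component_reach_closed: "u \<in> C \<Longrightarrow> reach E (V - {s, t}) u u' \<Longrightarrow> u' \<in> C"
proof -
  obtain x where "C = {y. reach E (V - {s, t}) x y}" using componentE by blast
  then show "u \<in> C \<Longrightarrow> reach E (V - {s, t}) u u' \<Longrightarrow> u' \<in> C" by (auto intro: reach_trans)
qed

lemma component_reach: "a \<in> C \<Longrightarrow> b \<in> C \<Longrightarrow> reach E (V - {s, t}) a b"
proof -
  obtain x where "C = {y. reach E (V - {s, t}) x y}" using componentE by blast
  then show "a \<in> C \<Longrightarrow> b \<in> C \<Longrightarrow> reach E (V - {s, t}) a b"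
    by (auto intro: reach_trans reach_sym edge_sym)
qed

lemma component_edge_closed:
  assumes "u \<in> C" "E u u'" "u' \<notin> {s, t}"
  shows "u' \<in> C"
proof -
  have "u \<in> V - {s, t}" "u' \<in> V - {s, t}" using assms component_subset edge_in_V by auto
  then have "reach E (V - {s, t}) u u'" by (metis reach_step reach_refl assms(2))
  then show ?thesis using component_reach_closed assms(1) by blast
qed

lemma reach_minus_vertex:
  assumes "v \<in> V" "x \<in> V - {v}" "y \<in> V - {v}"
  shows "reach E (V - {v}) x y"
proof -
  have "connected_graph (V - {v}) E" using biconnected assms(1) unfolding biconnected_def by blast
  then show ?thesis using assms(2,3) unfolding connected_graph_def by blast
qed

lemma reach_minus_edge:
  assumes "E a b" "x \<in> V - {a, b}" "y \<in> V - {a, b}"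
  shows "reach E (V - {a, b}) x y"
proof -
  have "a \<in> V" "b \<in> V" "a \<noteq> b" using assms(1) edge_in_V edge_irrefl by auto
  then have "connected_graph (V - {a, b}) E"
    using no_transitive_edges assms(1) unfolding no_transitive_edges_def sep_pair_def by blast
  then show ?thesis using assms(2,3) unfolding connected_graph_def by blast
qed

lemma butlast_in_component_iff:
  assumes "path_in E S p" "S - {last p} \<subseteq> V - {s, t}" "u \<in> set (butlast p)"
  shows "u \<in> C \<longleftrightarrow> hd p \<in> C"
proof -
  have "reach E (V - {s, t}) (hd p) u"
    using reach_mono[OF reach_if_in_butlast[OF assms(1,3)] assms(2)] .
  moreover from this have "reach E (V - {s, t}) u (hd p)" by (rule reach_sym[OF edge_sym])
  ultimately show ?thesis
    using component_reach_closed[of "hd p" u] component_reach_closed[of u "hd p"] by blast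
qed

lemma path_between_poles_outside: obtains P where "path_in E (V - C) (s # P @ [t])"
proof -
  have "V - {s, t} \<noteq> {}" "\<not> connected_graph (V - {s, t}) E"
    using componentE component unfolding component_def sep_pair_def by blast+
  then obtain a b where ab: "a \<in> V - {s, t}" "b \<in> V - {s, t}" "\<not> reach E (V - {s, t}) a b"
    unfolding connected_graph_def by blast
  obtain u where u: "u \<in> V - {s, t}" "u \<notin> C"
  proof (cases "a \<in> C")
    case True
    then show thesis using that[of b] ab component_reach[of a b] by blast
  next
    case False
    then show thesis using that[of a] ab(1) by blast
  qed
  have reach_pole: "reach E (V - C) u v" if v: "v \<in> {s, t}" "v' \<in> {s, t}" "v \<noteq> v'" for v v'
  proof -
    have "v' \<in> V" "u \<in> V - {v'}" "v \<in> V - {v'}" using u v poles by auto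
    then have "reach E (V - {v'}) u v" by (rule reach_minus_vertex)
    moreover have "u \<noteq> v" using u v by auto
    ultimately obtain P where P: "path_in E (V - {v'}) (u # P @ [v])"
      by (rule reach_path_between)
    have "V - {v'} - {last (u # P @ [v])} \<subseteq> V - {s, t}" using v by auto
    then have "set (u # P) \<inter> C = {}"
      using butlast_in_component_iff[OF P] u(2) by (auto simp: butlast_append)
    then have "set (u # P @ [v]) \<subseteq> V - C"
      using P component_subset v unfolding path_in_def by auto
    then have "path_in E (V - C) (u # P @ [v])" by (rule path_in_subset[OF P])
    then show ?thesis unfolding reach_def by force
  qed
  have "reach E (V - C) s u" "reach E (V - C) u t"
    using reach_sym[OF edge_sym reach_pole[of s t]] reach_pole[of t s] poles by simp_all
  then have "reach E (V - C) s t" by (rule reach_trans)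
  from this poles(3) show thesis by (rule reach_path_between) (rule that)
qed

end

locale far_vertex = pole_component +
  fixes w :: 'a
  assumes w_far: "w \<in> far_vertices E s t C"
begin

abbreviation D :: "'a set" where "D \<equiv> {u. reach E (far_vertices E s t C) w u}"

abbreviation N :: "'a set" where "N \<equiv> neighbourhood E D"

lemma D_subset_far_vertices: "D \<subseteq> far_vertices E s t C"
  by (auto dest: reach_in)

lemma w_in_D: "w \<in> D"
  using w_far by (simp add: reach_refl)

lemma N_subset_C: "N \<subseteq> C"
proof
  fix x assume "x \<in> N"
  then obtain d where d: "d \<in> D" "E d x" unfolding neighbourhood_def by blast
  then have "d \<in> C" "x \<notin> {s, t}" using D_subset_far_vertices unfolding far_vertices_def by auto
  then show "x \<in> C" using component_edge_closed d(2) by blast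
qed

lemma D_Un_N_subset_C: "D \<union> N \<subseteq> C"
  using D_subset_far_vertices N_subset_C unfolding far_vertices_def by blast

lemma N_adjacent_pole: "x \<in> N \<Longrightarrow> E x s \<or> E x t"
proof (rule ccontr)
  assume x: "x \<in> N" "\<not> (E x s \<or> E x t)"
  then obtain d where d: "d \<in> D" "E d x" "x \<notin> D" unfolding neighbourhood_def by blast
  have "x \<in> far_vertices E s t C" using x N_subset_C unfolding far_vertices_def by auto
  then have "x \<in> D" using reach_step[of E _ w d x] d(1,2) by simp
  then show False using d(3) by contradiction
qed

lemma path_through_D:
  assumes "x \<in> N" "y \<in> N" "x \<noteq> y"
  obtains P where "P \<noteq> []" "set P \<subseteq> D" "path_in E (D \<union> {x, y}) (x # P @ [y])"
proof -
  obtain d1 d2 where d: "d1 \<in> D" "E d1 x" "d2 \<in> D" "E d2 y"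
    using assms(1,2) unfolding neighbourhood_def by blast
  then have "reach E (far_vertices E s t C) d1 d2"
    using reach_trans[OF reach_sym[OF edge_sym]] by blast
  then obtain P where P: "path_in E (far_vertices E s t C) P" "hd P = d1" "last P = d2"
    unfolding reach_def by blast
  have "set P \<subseteq> D"
    using reach_trans[of E _ w d1] reach_if_in_path[OF P(1)] P(2) d(1) by blast
  then have "path_in E (D \<union> {x, y}) P" using path_in_subset[OF P(1)] by blast
  moreover have "x \<notin> D" "y \<notin> D" using assms(1,2) unfolding neighbourhood_def by auto
  moreover have "P \<noteq> []" using P(1) by (simp add: path_in_def)
  ultimately have "path_in E (D \<union> {x, y}) (x # P @ [y])"
    using P(2,3) d(4) sympD[OF edge_sym d(2)] assms(3) \<open>set P \<subseteq> D\<close>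
    by (intro path_in_extend[where p = P]) auto
  with \<open>P \<noteq> []\<close> \<open>set P \<subseteq> D\<close> show thesis by (rule that)
qed

lemma critical_if_N_split:
  assumes x: "x \<in> N" "E x s" "\<not> E x t" and y: "y \<in> N" "E y t" "\<not> E y s"
  shows "critical E s t C"
proof -
  have "x \<noteq> y" using x(2) y(3) by blast
  then obtain P where P: "P \<noteq> []" "set P \<subseteq> D" "path_in E (D \<union> {x, y}) (x # P @ [y])"
    using path_through_D x(1) y(1) by blast
  have in_C: "set (x # P @ [y]) \<subseteq> C" using P(2) x(1) y(1) D_Un_N_subset_C by auto
  then have "path_in E (C \<union> {s, t}) (x # P @ [y])" using path_in_subset[OF P(3)] by blast
  moreover have "{s, t} \<subseteq> C \<union> {s, t} - set (x # P @ [y])" using in_C component_subset by blast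
  ultimately have "path_in E (C \<union> {s, t}) (s # (x # P @ [y]) @ [t])"
    using sympD[OF edge_sym x(2)] y(2) poles(3) by (intro path_in_extend[where p = "x # P @ [y]"]) auto
  moreover obtain v P' where "P = v # P'" using P(1) by (cases P) auto
  moreover have "set P \<subseteq> far_vertices E s t C" using P(2) D_subset_far_vertices by blast
  ultimately have "v \<in> C \<and> \<not> E v s \<and> \<not> E v t \<and>
      path_in E (C \<union> {s, t}) (s # [x] @ v # (P' @ [y]) @ [t]) \<and>
      (\<forall>u\<in>set [x]. \<not> E u t) \<and> (\<forall>u\<in>set (P' @ [y]). \<not> E u s)"
    using x(3) y(3) unfolding far_vertices_def by auto
  then show ?thesis unfolding critical_def by blast
qed

lemma path_from_N_to_t:
  obtains y Q where "y \<in> N" "path_in E (V - {s}) (y # Q @ [t])" "set Q \<inter> (D \<union> N) = {}"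
    "set (y # Q) \<subseteq> C"
proof -
  have "w \<in> V - {s}" "t \<in> V - {s}" "w \<noteq> t" using w_in_D D_Un_N_subset_C component_subset poles by auto
  then obtain P where P: "path_in E (V - {s}) (w # P @ [t])"
    using reach_minus_vertex[OF poles(1)] reach_path_between by metis
  have "hd (w # P @ [t]) \<in> D" "last (w # P @ [t]) \<notin> D \<union> N"
    using w_in_D D_Un_N_subset_C component_subset by auto
  with P obtain a y c where split: "w # P @ [t] = a @ y # c" "path_in E (V - {s}) (y # c)" "y \<in> N"
    "c \<noteq> []" "set c \<inter> (D \<union> N) = {}"
    by (rule path_leaves_through_neighbourhood)
  have "last c = t" using arg_cong[OF split(1), of last] split(4) by simp
  then obtain Q where Q: "c = Q @ [t]" using split(4) by (cases c rule: rev_cases) auto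
  have "set (y # Q) \<subseteq> C"
    using butlast_in_component_iff[of "V - {s}" "y # Q @ [t]"] split(2,3) Q N_subset_C
    by (auto simp: butlast_append)
  then show thesis using that split Q by auto
qed

lemma second_path_from_N:
  assumes y: "y \<in> N" "E s y"
    and Q: "path_in E (V - {s}) (y # Q @ [t])" "set Q \<inter> (D \<union> N) = {}"
  obtains x c z where "x \<in> N" "z \<in> set (Q @ [t])" "path_in E (V - {s, y}) (x # c @ [z])"
    "set c \<subseteq> C" "set c \<inter> (D \<union> N) = {}" "set (x # c) \<inter> set (y # Q @ [t]) = {}"
proof -
  have "y \<in> C" "y \<notin> D" using y(1) N_subset_C unfolding neighbourhood_def by auto
  then have "w \<in> V - {s, y}" "t \<in> V - {s, y}" "w \<noteq> t"
    using w_in_D D_Un_N_subset_C component_subset poles by auto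
  then obtain P where P: "path_in E (V - {s, y}) (w # P @ [t])"
    using reach_minus_edge[OF y(2)] reach_path_between by metis
  have "\<exists>u\<in>set (w # P @ [t]). u \<in> set (Q @ [t])" by simp
  then obtain a z b where split: "w # P @ [t] = a @ z # b" "z \<in> set (Q @ [t])"
    and a: "\<forall>u\<in>set a. u \<notin> set (Q @ [t])"
    using split_list_first_prop[of "w # P @ [t]" "\<lambda>u. u \<in> set (Q @ [t])"] by blast
  have "t \<notin> D \<union> N" using D_Un_N_subset_C component_subset by auto
  then have "w \<notin> set (Q @ [t])" using w_in_D Q(2) by auto
  then obtain a0 where a0: "a = w # a0" using split(1,2) by (cases a) auto
  have "path_in E (V - {s, y}) (a @ [z])"
    using P split(1) path_in_prefix[of E _ "a @ [z]" b] by simp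
  moreover have "hd (a @ [z]) \<in> D" "last (a @ [z]) \<notin> D \<union> N"
    using a0 w_in_D split(2) Q(2) \<open>t \<notin> D \<union> N\<close> by auto
  ultimately obtain a' x c' where exit: "a @ [z] = a' @ x # c'" "path_in E (V - {s, y}) (x # c')"
    "x \<in> N" "c' \<noteq> []" "set c' \<inter> (D \<union> N) = {}"
    by (rule path_leaves_through_neighbourhood)
  have "last c' = z" using arg_cong[OF exit(1), of last] exit(4) by simp
  then obtain c where c: "c' = c @ [z]" using exit(4) by (cases c' rule: rev_cases) auto
  then have xc_in_a: "set (x # c) \<subseteq> set a" using exit(1) by auto
  have "set (butlast (w # P @ [t])) \<subseteq> C"
    using butlast_in_component_iff[OF path_in_subset[OF P, of "V - {s}"]] w_in_D D_Un_N_subset_C P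
    unfolding path_in_def by auto
  moreover have "set a \<subseteq> set (butlast (w # P @ [t]))" using split(1) by (simp add: butlast_append)
  moreover have "y \<notin> set (x # c)" using exit(2) c unfolding path_in_def by auto
  ultimately show thesis
    using that[of x z c] exit(2,3,5) c split(2) a xc_in_a by auto
qed

lemma has_K4_subdivision_if_N_adjacent_s:
  assumes N_s: "\<forall>x\<in>N. E x s"
  shows "has_K4_subdivision V E"
proof -
  obtain y Q where y: "y \<in> N" and Q: "path_in E (V - {s}) (y # Q @ [t])" "set Q \<inter> (D \<union> N) = {}"
    "set (y # Q) \<subseteq> C"
    by (rule path_from_N_to_t)
  have "E s y" using N_s y sympD[OF edge_sym] by blast
  with y obtain x c z where x: "x \<in> N" and z: "z \<in> set (Q @ [t])"
    and c: "path_in E (V - {s, y}) (x # c @ [z])" "set c \<subseteq> C" "set c \<inter> (D \<union> N) = {}"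
      "set (x # c) \<inter> set (y # Q @ [t]) = {}"
    using Q(1,2) by (rule second_path_from_N)
  obtain P where P: "path_in E (V - C) (s # P @ [t])" by (rule path_between_poles_outside)
  have "x \<noteq> y" using c(4) by auto
  then obtain Pd where Pd: "set Pd \<subseteq> D" "path_in E (D \<union> {x, y}) (x # Pd @ [y])"
    using path_through_D x y by blast
  obtain q1 q2 where q: "Q @ [t] = q1 @ z # q2" and yq1: "path_in E (V - {s}) (y # q1 @ [z])"
    and zq2: "path_in E (V - {s}) (z # q2)" "last (z # q2) = t" and "t \<notin> set q1"
    using Q(1) z by (rule path_in_split_at)
  have "set (q1 @ z # q2) \<subseteq> C \<union> {t}" using Q(3) unfolding q[symmetric] by auto
  with \<open>t \<notin> set q1\<close> have q_in_C: "set q1 \<subseteq> C" "set (z # q2) \<subseteq> C \<union> {t}" by auto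
  have "x \<in> C" "y \<in> C" "x \<notin> D" "y \<notin> D" "D \<subseteq> C"
    using x y D_Un_N_subset_C unfolding neighbourhood_def by auto
  show ?thesis
  proof (rule has_K4_subdivisionI[of s x y z "[]" "[]" "P @ rev q2" Pd c q1])
    have "set (s # P @ [t]) \<subseteq> V - C" "distinct (s # P @ [t])"
      using P unfolding path_in_def by auto
    moreover have "distinct (y # q1 @ z # q2)" "s \<notin> set (y # q1 @ z # q2)"
      using Q(1) unfolding q path_in_def by auto
    moreover have "distinct (x # c @ [z])" "y \<notin> set (x # c @ [z])" "distinct Pd"
      using c(1) Pd(2) unfolding path_in_def by auto
    moreover have "set (q1 @ z # q2) \<inter> D = {}"
      unfolding q[symmetric] using Q(2) \<open>D \<subseteq> C\<close> component_subset by auto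
    ultimately show "distinct (s # x # y # z # [] @ [] @ (P @ rev q2) @ Pd @ c @ q1)"
      using c(2-4) Pd(1) q_in_C \<open>x \<in> C\<close> \<open>y \<in> C\<close> \<open>x \<notin> D\<close> \<open>y \<notin> D\<close> \<open>D \<subseteq> C\<close>
      unfolding q by auto
    show "path_in E V (s # [] @ [x])" "path_in E V (s # [] @ [y])"
      using N_s x y sympD[OF edge_sym] \<open>x \<in> C\<close> \<open>y \<in> C\<close> component_subset poles(1)
      by (auto simp: path_in_Cons_Cons)
    have "set (s # P) \<inter> set (z # q2) = {}" using P q_in_C unfolding path_in_def by auto
    then show "path_in E V (s # (P @ rev q2) @ [z])"
      using path_in_glue_rev[OF edge_sym path_in_mono[OF P] path_in_mono[OF zq2(1)] zq2(2)] by blast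
    have "D \<union> {x, y} \<subseteq> V" using \<open>D \<subseteq> C\<close> \<open>x \<in> C\<close> \<open>y \<in> C\<close> component_subset by auto
    then show "path_in E V (x # Pd @ [y])" by (rule path_in_mono[OF Pd(2)])
    show "path_in E V (x # c @ [z])" by (rule path_in_mono[OF c(1)]) auto
    show "path_in E V (y # q1 @ [z])" by (rule path_in_mono[OF yq1]) auto
  qed
qed

end

context pole_component
begin

lemma critical_if_heavy:
  assumes "\<not> has_K4_subdivision V E" "heavy E s t C"
  shows "critical E s t C"
proof -
  obtain w where "w \<in> far_vertices E s t C" using assms(2) unfolding heavy_iff_far_vertices by blast
  then interpret far_vertex V E s t C w by unfold_locales
  interpret swapped: far_vertex V E t s C w
    using biconnected no_transitive_edges component_swap[OF component] w_far
    by unfold_locales (simp_all add: far_vertices_swap)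
  consider "\<exists>x\<in>N. E x s \<and> \<not> E x t" "\<exists>y\<in>N. E y t \<and> \<not> E y s" | "\<forall>x\<in>N. E x s" | "\<forall>x\<in>N. E x t"
    using N_adjacent_pole by blast
  then show ?thesis
  proof cases
    case 1
    then show ?thesis using critical_if_N_split by blast
  next
    case 2
    then show ?thesis using has_K4_subdivision_if_N_adjacent_s assms(1) by blast
  next
    case 3
    then show ?thesis
      using swapped.has_K4_subdivision_if_N_adjacent_s assms(1) by (simp add: far_vertices_swap)
  qed
qed

end

theorem lemma2:
  fixes V :: "'a set" and E :: "'a \<Rightarrow> 'a \<Rightarrow> bool" and s t :: 'a and C :: "'a set"
  assumes "biconnected V E"
    and "series_parallel V E"
    and "no_transitive_edges V E"
    and "component V E s t C"
  shows "critical E s t C \<longleftrightarrow> heavy E s t C"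
proof
  assume "critical E s t C"
  then show "heavy E s t C" unfolding critical_def heavy_def by blast
next
  assume "heavy E s t C"
  interpret pole_component V E s t C using assms(1,3,4) by unfold_locales
  have "\<not> has_K4_subdivision V E" using assms(2) unfolding series_parallel_def by blast
  from this \<open>heavy E s t C\<close> show "critical E s t C" by (rule critical_if_heavy)
qed

end
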